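(* Fix $\delta\in\{0,1\}^m$, tolerances $\epsilon_{\mathrm a}\in\mathbb R$ and $\epsilon_{\mathrm r}\ge0$, and a $p$-simplex $\mathcal R\subseteq\Theta^*_\delta$ with vertices $v_1,\dots,v_{p+1}$. For each $i$ let $x_i$ be an optimal solution of the fixed-commutation problem with parameter $v_i$. For $\theta=\sum_i\alpha_iv_i\in\mathcal R$ (barycentric coordinates $\alpha_i\ge0$, $\sum_i\alpha_i=1$) let $x^*=\sum_i\alpha_ix_i$, $\hat V_\delta(\theta)=f(\theta,x^*,\delta)$ and $\bar V_\delta(\theta)=\sum_i\alpha_iV^*_\delta(v_i)$. Let $$\hat e_{\mathrm a}(\mathcal R)=\sup\{\bar V_\delta(\theta)-V^*_{\delta'}(\theta):\theta\in\mathcal R,\ \delta'\in\{0,1\}^m,\ \theta\in\Theta^*_{\delta'}\}.$$ Suppose that either $\hat e_{\mathrm a}(\mathcal R)\le\epsilon_{\mathrm a}$, or $\inf_{\theta\in\mathcal R}V^*(\theta)>0$ and $\hat e_{\mathrm r}(\mathcal R)\triangleq\hat e_{\mathrm a}(\mathcal R)/\inf_{\theta\in\mathcal R}V^*(\theta)\le\epsilon_{\mathrm r}$. Then for every $\theta\in\mathcal R$, $$\hat V_\delta(\theta)-V^*(\theta)\le\max\{\epsilon_{\mathrm a},\epsilon_{\mathrm r}V^*(\theta)\}.$$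
   Context: Let $p,n,m,d,l$ be positive integers and let $\mathcal K\subseteq\mathbb R^d$ be a convex cone that is a Cartesian product of convex cones. Let $f,g,h$ be functions on $\mathbb R^p\times\mathbb R^n\times\mathbb R^m$ with values in $\mathbb R$, $\mathbb R^l$, $\mathbb R^d$ respectively, such that for each fixed $\delta\in\{0,1\}^m$, $(\theta,x)\mapsto f(\theta,x,\delta)$ is jointly convex and $(\theta,x)\mapsto g(\theta,x,\delta)$, $h(\theta,x,\delta)$ are affine. For $\delta\in\{0,1\}^m$ and $\theta\in\mathbb R^p$, the fixed-commutation problem is: minimize $f(\theta,x,\delta)$ over $x\in\mathbb R^n$ subject to $g(\theta,x,\delta)=0$, $h(\theta,x,\delta)\in\mathcal K$; $V^*_\delta(\theta)\in\mathbb R\cup\{+\infty\}$ is its optimal value ($+\infty$ if infeasible) and $\Theta^*_\delta$ the set of $\theta$ where it is feasible. $V^*(\theta)=\min_{\delta\in\{0,1\}^m}V^*_\delta(\theta)$ is the optimal value of the mixed-integer problem minimizing jointly over $x$ and $\delta\in\{0,1\}^m$. *)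

theory Defs
  imports "HOL-Analysis.Analysis"
begin

definition binvecs :: "(real^'m) set" where
  "binvecs = {\<delta>. \<forall>i. \<delta>$i = 0 \<or> \<delta>$i = 1}"

definition affine_map :: "('a::real_vector \<Rightarrow> 'b::real_vector) \<Rightarrow> bool" where
  "affine_map F \<longleftrightarrow> (\<exists>L c. linear L \<and> (\<forall>z. F z = L z + c))"

definition restrict_blk :: "'d set \<Rightarrow> real^'d \<Rightarrow> real^'d" where
  "restrict_blk b y = (\<chi> i. if i \<in> b then y$i else 0)"

definition product_of_convex_cones :: "(real^'d) set \<Rightarrow> bool" where
  "product_of_convex_cones K \<longleftrightarrow>
     (\<exists>P C. (\<forall>b\<in>P. b \<noteq> {}) \<and> (\<forall>b\<in>P. \<forall>b'\<in>P. b \<noteq> b' \<longrightarrow> b \<inter> b' = {}) \<and> \<Union>P = UNIV \<and>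
        (\<forall>b\<in>P. convex_cone (C b) \<and> C b \<subseteq> {y. \<forall>i. i \<notin> b \<longrightarrow> y$i = 0}) \<and>
        K = {y. \<forall>b\<in>P. restrict_blk b y \<in> C b})"

definition feas ::
  "(real^'p \<Rightarrow> real^'n \<Rightarrow> real^'m \<Rightarrow> real^'l) \<Rightarrow> (real^'p \<Rightarrow> real^'n \<Rightarrow> real^'m \<Rightarrow> real^'d)
   \<Rightarrow> (real^'d) set \<Rightarrow> real^'m \<Rightarrow> real^'p \<Rightarrow> (real^'n) set" where
  "feas g h K \<delta> \<theta> = {x. g \<theta> x \<delta> = 0 \<and> h \<theta> x \<delta> \<in> K}"

text \<open>Optimal value V*_delta(theta) (+infinity if infeasible).\<close>
definition Vstar_d ::
  "(real^'p \<Rightarrow> real^'n \<Rightarrow> real^'m \<Rightarrow> real) \<Rightarrow> (real^'p \<Rightarrow> real^'n \<Rightarrow> real^'m \<Rightarrow> real^'l)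
   \<Rightarrow> (real^'p \<Rightarrow> real^'n \<Rightarrow> real^'m \<Rightarrow> real^'d) \<Rightarrow> (real^'d) set \<Rightarrow> real^'m \<Rightarrow> real^'p \<Rightarrow> ereal" where
  "Vstar_d f g h K \<delta> \<theta> = (INF x\<in>feas g h K \<delta> \<theta>. ereal (f \<theta> x \<delta>))"

definition Theta_d ::
  "(real^'p \<Rightarrow> real^'n \<Rightarrow> real^'m \<Rightarrow> real^'l) \<Rightarrow> (real^'p \<Rightarrow> real^'n \<Rightarrow> real^'m \<Rightarrow> real^'d)
   \<Rightarrow> (real^'d) set \<Rightarrow> real^'m \<Rightarrow> (real^'p) set" where
  "Theta_d g h K \<delta> = {\<theta>. feas g h K \<delta> \<theta> \<noteq> {}}"

definition Vstar ::
  "(real^'p \<Rightarrow> real^'n \<Rightarrow> real^'m \<Rightarrow> real) \<Rightarrow> (real^'p \<Rightarrow> real^'n \<Rightarrow> real^'m \<Rightarrow> real^'l)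
   \<Rightarrow> (real^'p \<Rightarrow> real^'n \<Rightarrow> real^'m \<Rightarrow> real^'d) \<Rightarrow> (real^'d) set \<Rightarrow> real^'p \<Rightarrow> ereal" where
  "Vstar f g h K \<theta> = (INF \<delta>\<in>binvecs. Vstar_d f g h K \<delta> \<theta>)"

text \<open>Barycentric coordinates of theta w.r.t. vertices v (unique for a simplex).\<close>
definition baryc :: "('i::finite \<Rightarrow> real^'p) \<Rightarrow> real^'p \<Rightarrow> ('i \<Rightarrow> real)" where
  "baryc v \<theta> = (THE \<alpha>. (\<forall>i. \<alpha> i \<ge> 0) \<and> sum \<alpha> UNIV = 1 \<and> \<theta> = (\<Sum>i\<in>UNIV. \<alpha> i *\<^sub>R v i))"

end

theory Submission
  imports Defs
begin

text \<open>By Jensen's inequality for the jointly convex cost, \<open>f(\<theta>, x\<^sup>*, \<delta>)\<close> is at most the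
  interpolated value \<open>\<Sum>\<^sub>i \<alpha>\<^sub>i V\<^sup>*\<^sub>\<delta>(v\<^sub>i)\<close>, and the barycentric coordinates of \<open>\<theta>\<close> are exactly
  the \<open>\<alpha>\<^sub>i\<close>. The minimum defining \<open>V\<^sup>*(\<theta>)\<close> ranges over finitely many commutations, so it is
  attained at some \<open>\<delta>'\<close>; it is finite because \<open>\<theta>\<close> is feasible for \<open>\<delta>\<close>, hence \<open>\<theta>\<close> is
  feasible for \<open>\<delta>'\<close> and the gap is one of the terms of the supremum \<open>e\<^sub>a\<close>. The absolute
  tolerance bounds it directly, the relative one after using \<open>inf V\<^sup>* \<le> V\<^sup>*(\<theta>)\<close>.
  Only convexity of \<open>f\<close> is needed: the hypotheses on \<open>g\<close>, \<open>h\<close> and \<open>K\<close> make \<open>x\<^sup>*\<close> feasible,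
  which the inequality itself does not use.\<close>

lemma finite_binvecs: "finite (binvecs :: (real^'m) set)"
proof -
  have "binvecs \<subseteq> (\<lambda>S. \<chi> i. if i \<in> S then 1 else 0) ` (UNIV :: 'm set set)"
  proof
    fix d :: "real^'m" assume "d \<in> binvecs"
    hence "d = (\<chi> i. if i \<in> {i. d$i = 1} then 1 else 0)"
      unfolding binvecs_def by (auto simp: vec_eq_iff)
    thus "d \<in> range (\<lambda>S. \<chi> i. if i \<in> S then 1 else 0)" by blast
  qed
  thus ?thesis by (rule finite_subset) simp
qed

lemma zero_in_binvecs: "0 \<in> binvecs"
  by (simp add: binvecs_def)

lemma baryc_convex_combination:
  fixes v :: "'i::finite \<Rightarrow> real^'p"
  assumes inj: "inj v" and indep: "\<not> affine_dependent (range v)"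
    and \<alpha>: "\<forall>i. \<alpha> i \<ge> 0" "sum \<alpha> UNIV = 1"
  shows "baryc v (\<Sum>i\<in>UNIV. \<alpha> i *\<^sub>R v i) = \<alpha>"
  unfolding baryc_def
proof (rule the_equality)
  fix \<beta> assume \<beta>: "(\<forall>i. \<beta> i \<ge> 0) \<and> sum \<beta> UNIV = 1 \<and>
                   (\<Sum>i\<in>UNIV. \<alpha> i *\<^sub>R v i) = (\<Sum>i\<in>UNIV. \<beta> i *\<^sub>R v i)"
  show "\<beta> = \<alpha>"
  proof (rule ccontr)
    assume "\<beta> \<noteq> \<alpha>"
    then obtain j where j: "\<beta> j \<noteq> \<alpha> j" by auto
    define U where "U = (\<lambda>y. \<alpha> (inv v y) - \<beta> (inv v y))"
    have U_v: "\<And>i. U (v i) = \<alpha> i - \<beta> i" unfolding U_def using inj by simp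
    have "sum U (range v) = (\<Sum>i\<in>UNIV. \<alpha> i - \<beta> i)"
      by (simp add: sum.reindex[OF inj] U_v)
    hence weights: "sum U (range v) = 0" using \<alpha> \<beta> by (simp add: sum_subtractf)
    have "(\<Sum>y\<in>range v. U y *\<^sub>R y) = (\<Sum>i\<in>UNIV. (\<alpha> i - \<beta> i) *\<^sub>R v i)"
      by (simp add: sum.reindex[OF inj] U_v)
    hence combination: "(\<Sum>y\<in>range v. U y *\<^sub>R y) = 0"
      using \<beta> by (simp add: scaleR_diff_left sum_subtractf)
    have "\<exists>y\<in>range v. U y \<noteq> 0" using j U_v by (metis rangeI right_minus_eq)
    hence "affine_dependent (range v)"
      using weights combination by (subst affine_dependent_explicit_finite) auto
    thus False using indep by simp
  qed
qed (use \<alpha> in simp)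

lemma convex_on_joint_sum:
  fixes \<phi> :: "'a::real_vector \<Rightarrow> 'b::real_vector \<Rightarrow> real"
  assumes "convex_on UNIV (\<lambda>(u, w). \<phi> u w)" and "finite I"
    and "\<forall>i\<in>I. \<alpha> i \<ge> 0" "sum \<alpha> I = 1"
  shows "\<phi> (\<Sum>i\<in>I. \<alpha> i *\<^sub>R u i) (\<Sum>i\<in>I. \<alpha> i *\<^sub>R w i) \<le> (\<Sum>i\<in>I. \<alpha> i * \<phi> (u i) (w i))"
proof -
  have "(\<lambda>(u, w). \<phi> u w) (\<Sum>i\<in>I. \<alpha> i *\<^sub>R (u i, w i)) \<le> (\<Sum>i\<in>I. \<alpha> i * (\<lambda>(u, w). \<phi> u w) (u i, w i))"
    by (rule convex_on_sum[OF assms(2) _ assms(1)]) (use assms in auto)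
  moreover have "(\<Sum>i\<in>I. \<alpha> i *\<^sub>R (u i, w i)) = (\<Sum>i\<in>I. \<alpha> i *\<^sub>R u i, \<Sum>i\<in>I. \<alpha> i *\<^sub>R w i)"
    by (simp add: fst_sum snd_sum prod_eq_iff)
  ultimately show ?thesis by simp
qed

lemma Vstar_attained: "\<exists>\<delta>'\<in>binvecs. Vstar f g h K \<theta> = Vstar_d f g h K \<delta>' \<theta>"
proof -
  have "Inf ((\<lambda>\<delta>'. Vstar_d f g h K \<delta>' \<theta>) ` binvecs) \<in> (\<lambda>\<delta>'. Vstar_d f g h K \<delta>' \<theta>) ` binvecs"
    by (rule finite_Inf_in) (use finite_binvecs zero_in_binvecs in \<open>auto simp: inf_min min_def\<close>)
  thus ?thesis unfolding Vstar_def by auto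
qed

lemma Vstar_le_feasible:
  assumes "\<delta> \<in> binvecs" and "x \<in> feas g h K \<delta> \<theta>"
  shows "Vstar f g h K \<theta> \<le> ereal (f \<theta> x \<delta>)"
proof -
  have "Vstar f g h K \<theta> \<le> Vstar_d f g h K \<delta> \<theta>"
    unfolding Vstar_def using assms(1) by (rule INF_lower)
  also have "\<dots> \<le> ereal (f \<theta> x \<delta>)"
    unfolding Vstar_d_def using assms(2) by (rule INF_lower)
  finally show ?thesis .
qed

lemma Vstar_d_infeasible:
  assumes "\<theta> \<notin> Theta_d g h K \<delta>"
  shows "Vstar_d f g h K \<delta> \<theta> = \<infinity>"
  using assms unfolding Theta_d_def Vstar_d_def by (simp add: top_ereal_def)

lemma gap_Vstar_le_SUP_gap:
  fixes F :: "real^'p \<Rightarrow> ereal"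
  assumes "\<theta> \<in> R" and "Vstar f g h K \<theta> \<noteq> \<infinity>"
  shows "F \<theta> - Vstar f g h K \<theta>
           \<le> (SUP (\<theta>, \<delta>')\<in>{(\<theta>, \<delta>'). \<theta> \<in> R \<and> \<delta>' \<in> binvecs \<and> \<theta> \<in> Theta_d g h K \<delta>'}.
                F \<theta> - Vstar_d f g h K \<delta>' \<theta>)"
proof -
  obtain \<delta>' where \<delta>': "\<delta>' \<in> binvecs" "Vstar f g h K \<theta> = Vstar_d f g h K \<delta>' \<theta>"
    using Vstar_attained by blast
  hence "\<theta> \<in> Theta_d g h K \<delta>'" using assms(2) Vstar_d_infeasible by metis
  thus ?thesis unfolding \<delta>'(2)
    by (intro SUP_upper2[where i="(\<theta>, \<delta>')"]) (use assms(1) \<delta>'(1) in auto)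
qed

lemma ereal_gap_le_max_tolerance:
  fixes V Vinf ea :: ereal and a b \<epsilon>a \<epsilon>r :: real
  assumes a_le_b: "a \<le> b" and gap: "ereal b - V \<le> ea" and V_finite: "V \<noteq> \<infinity>"
    and Vinf_le: "Vinf \<le> V" and \<epsilon>r_nonneg: "\<epsilon>r \<ge> 0"
    and tol: "ea \<le> ereal \<epsilon>a \<or> (Vinf > 0 \<and> ea / Vinf \<le> ereal \<epsilon>r)"
  shows "ereal a - V \<le> max (ereal \<epsilon>a) (ereal \<epsilon>r * V)"
  using tol
proof
  assume "ea \<le> ereal \<epsilon>a"
  moreover have "ereal a - V \<le> ereal b - V"
    using a_le_b by (intro ereal_minus_mono) auto
  ultimately show ?thesis using gap by (meson max.coboundedI1 order_trans)
next
  assume rel: "Vinf > 0 \<and> ea / Vinf \<le> ereal \<epsilon>r"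
  then obtain vi vv where vi: "Vinf = ereal vi" "V = ereal vv" "vi > 0" "vi \<le> vv"
    using Vinf_le V_finite by (cases Vinf; cases V) auto
  obtain e where e: "ea = ereal e"
    using gap rel vi by (cases ea) auto
  have "e \<le> \<epsilon>r * vi" using rel vi e by (simp add: divide_le_eq)
  also have "\<dots> \<le> \<epsilon>r * vv" using vi \<epsilon>r_nonneg by (simp add: mult_left_mono)
  finally have "a - vv \<le> \<epsilon>r * vv" using gap a_le_b e vi by simp
  thus ?thesis using vi by (simp add: max.coboundedI2)
qed

theorem theorem7:
  fixes f :: "real^'p \<Rightarrow> real^'n \<Rightarrow> real^'m \<Rightarrow> real"
    and g :: "real^'p \<Rightarrow> real^'n \<Rightarrow> real^'m \<Rightarrow> real^'l"
    and h :: "real^'p \<Rightarrow> real^'n \<Rightarrow> real^'m \<Rightarrow> real^'d"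
    and K :: "(real^'d) set"
    and \<delta> :: "real^'m"
    and \<epsilon>a \<epsilon>r :: real
    and v :: "'i::finite \<Rightarrow> real^'p"
    and xs :: "'i \<Rightarrow> real^'n"
  assumes K_cone: "convex_cone K" and K_prod: "product_of_convex_cones K"
    and f_cvx: "\<And>\<delta>'. \<delta>' \<in> binvecs \<Longrightarrow> convex_on UNIV (\<lambda>(\<theta>, x). f \<theta> x \<delta>')"
    and g_aff: "\<And>\<delta>'. \<delta>' \<in> binvecs \<Longrightarrow> affine_map (\<lambda>(\<theta>, x). g \<theta> x \<delta>')"
    and h_aff: "\<And>\<delta>'. \<delta>' \<in> binvecs \<Longrightarrow> affine_map (\<lambda>(\<theta>, x). h \<theta> x \<delta>')"
    and \<delta>_bin: "\<delta> \<in> binvecs"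
    and \<epsilon>r_nonneg: "\<epsilon>r \<ge> 0"
    and card_i: "CARD('i) = CARD('p) + 1"
    and v_inj: "inj v"
    and v_indep: "\<not> affine_dependent (range v)"
    and R_sub: "convex hull (range v) \<subseteq> Theta_d g h K \<delta>"
    and xs_opt: "\<And>i. xs i \<in> feas g h K \<delta> (v i) \<and> ereal (f (v i) (xs i) \<delta>) = Vstar_d f g h K \<delta> (v i)"
    and tol: "(let Vbar = (\<lambda>\<theta>. \<Sum>i\<in>UNIV. ereal (baryc v \<theta> i) * Vstar_d f g h K \<delta> (v i));
                   ea = (SUP (\<theta>, \<delta>')\<in>{(\<theta>, \<delta>'). \<theta> \<in> convex hull (range v) \<and> \<delta>' \<in> binvecs \<and> \<theta> \<in> Theta_d g h K \<delta>'}.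
                           Vbar \<theta> - Vstar_d f g h K \<delta>' \<theta>);
                   Vinf = (INF \<theta>\<in>convex hull (range v). Vstar f g h K \<theta>)
               in ea \<le> ereal \<epsilon>a \<or> (Vinf > 0 \<and> ea / Vinf \<le> ereal \<epsilon>r))"
  shows "\<forall>\<alpha>. (\<forall>i. \<alpha> i \<ge> 0) \<and> sum \<alpha> UNIV = 1 \<longrightarrow>
           (let \<theta> = (\<Sum>i\<in>UNIV. \<alpha> i *\<^sub>R v i); xstar = (\<Sum>i\<in>UNIV. \<alpha> i *\<^sub>R xs i)
            in ereal (f \<theta> xstar \<delta>) - Vstar f g h K \<theta>
                 \<le> max (ereal \<epsilon>a) (ereal \<epsilon>r * Vstar f g h K \<theta>))"
proof (intro allI impI)
  fix \<alpha> :: "'i \<Rightarrow> real"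
  assume \<alpha>: "(\<forall>i. \<alpha> i \<ge> 0) \<and> sum \<alpha> UNIV = 1"
  define \<theta> where "\<theta> = (\<Sum>i\<in>UNIV. \<alpha> i *\<^sub>R v i)"
  define V where "V = Vstar f g h K \<theta>"
  define Vb where "Vb = (\<Sum>i\<in>UNIV. \<alpha> i * f (v i) (xs i) \<delta>)"
  define Vbar where "Vbar = (\<lambda>\<theta>. \<Sum>i\<in>UNIV. ereal (baryc v \<theta> i) * Vstar_d f g h K \<delta> (v i))"
  define ea where "ea = (SUP (\<theta>, \<delta>')\<in>{(\<theta>, \<delta>'). \<theta> \<in> convex hull (range v) \<and> \<delta>' \<in> binvecs \<and> \<theta> \<in> Theta_d g h K \<delta>'}.
                           Vbar \<theta> - Vstar_d f g h K \<delta>' \<theta>)"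
  define Vinf where "Vinf = (INF \<theta>\<in>convex hull (range v). Vstar f g h K \<theta>)"
  have \<theta>_in: "\<theta> \<in> convex hull (range v)"
    unfolding \<theta>_def by (rule convex_sum) (use \<alpha> in \<open>auto intro: hull_inc\<close>)
  then obtain x0 where "x0 \<in> feas g h K \<delta> \<theta>" using R_sub unfolding Theta_d_def by auto
  hence V_finite: "V \<noteq> \<infinity>"
    unfolding V_def using Vstar_le_feasible[OF \<delta>_bin, of x0 g h K \<theta> f] by auto
  have "Vbar \<theta> = ereal Vb"
    unfolding Vbar_def \<theta>_def baryc_convex_combination[OF v_inj v_indep \<alpha>[THEN conjunct1] \<alpha>[THEN conjunct2]]
      Vb_def sum_ereal[symmetric] using xs_opt by (intro sum.cong) (auto simp: times_ereal.simps(1)[symmetric])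
  hence gap: "ereal Vb - V \<le> ea"
    unfolding ea_def V_def using gap_Vstar_le_SUP_gap[OF \<theta>_in V_finite[unfolded V_def], of Vbar] by simp
  have jensen: "f \<theta> (\<Sum>i\<in>UNIV. \<alpha> i *\<^sub>R xs i) \<delta> \<le> Vb"
    unfolding \<theta>_def Vb_def by (rule convex_on_joint_sum[OF f_cvx[OF \<delta>_bin]]) (use \<alpha> in auto)
  have "Vinf \<le> V" unfolding Vinf_def V_def using \<theta>_in by (rule INF_lower)
  moreover have "ea \<le> ereal \<epsilon>a \<or> (Vinf > 0 \<and> ea / Vinf \<le> ereal \<epsilon>r)"
    using tol unfolding Vbar_def ea_def Vinf_def Let_def by simp
  ultimately have "ereal (f \<theta> (\<Sum>i\<in>UNIV. \<alpha> i *\<^sub>R xs i) \<delta>) - V \<le> max (ereal \<epsilon>a) (ereal \<epsilon>r * V)"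
    by (rule ereal_gap_le_max_tolerance[OF jensen gap V_finite _ \<epsilon>r_nonneg])
  thus "let \<theta> = (\<Sum>i\<in>UNIV. \<alpha> i *\<^sub>R v i); xstar = (\<Sum>i\<in>UNIV. \<alpha> i *\<^sub>R xs i)
            in ereal (f \<theta> xstar \<delta>) - Vstar f g h K \<theta> \<le> max (ereal \<epsilon>a) (ereal \<epsilon>r * Vstar f g h K \<theta>)"
    unfolding Let_def \<theta>_def[symmetric] V_def .
qed

end
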